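(* Let $N$ be a finite index set and $\{\xi_i\}_{i\in N}$ random vectors in $\mathbb R^p$, $\xi_i=(\xi_{ik})_{k=1}^p$, with $\mathbf E[\xi_i]=0$ and $\mathbf E[\max_{1\le k\le p}|\xi_{ik}|^2]<\infty$ for all $i$. Suppose $\{\xi_i\}_{i\in N}$ has an undirected graph $G^*=(N,E^* )$ as a dependency graph, and let $d^*_{mx}=\max_{i\in N}|N^*(i)|$ be its maximum degree. Then $$\mathbf E\Big(\max_{1\le k\le p}\Big|\sum_{i\in N}\xi_{ik}\Big|\Big)^2\le(d^*_{mx}+1)^2M_p\sum_{i\in N}\mathbf E\Big(\max_{1\le k\le p}|\xi_{ik}|\Big)^2,$$ where $M_p=\max\{3,\,2e\log p-e\}$.
   Context: For an undirected graph $G^*=(N,E^* )$, $N^*(i)=\{j\in N: ij\in E^*\}$ is the neighborhood of $i$, $N^*(A)=\bigcup_{i\in A}N^*(i)$ and $\overline N^*(A)=N^*(A)\cup A$. $G^*$ is a dependency graph for $\{\xi_i\}_{i\in N}$ if for every $A\subset N$, $(\xi_i)_{i\in A}$ is independent of $(\xi_i)_{i\in N\setminus\overline N^*(A)}$. *)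

theory Defs
  imports "HOL-Probability.Probability"
begin

definition undirected_graph :: "'i set \<Rightarrow> ('i \<Rightarrow> 'i \<Rightarrow> bool) \<Rightarrow> bool" where
  "undirected_graph N E \<longleftrightarrow>
     (\<forall>i j. E i j \<longrightarrow> i \<in> N \<and> j \<in> N) \<and> (\<forall>i j. E i j \<longrightarrow> E j i) \<and> (\<forall>i. \<not> E i i)"

definition nbhd :: "'i set \<Rightarrow> ('i \<Rightarrow> 'i \<Rightarrow> bool) \<Rightarrow> 'i \<Rightarrow> 'i set" where
  "nbhd N E i = {j \<in> N. E i j}"

definition closed_nbhd_set :: "'i set \<Rightarrow> ('i \<Rightarrow> 'i \<Rightarrow> bool) \<Rightarrow> 'i set \<Rightarrow> 'i set" where
  "closed_nbhd_set N E A = (\<Union>i\<in>A. nbhd N E i) \<union> A"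

definition dependency_graph ::
  "'a measure \<Rightarrow> 'i set \<Rightarrow> ('i \<Rightarrow> 'i \<Rightarrow> bool) \<Rightarrow> ('i \<Rightarrow> 'a \<Rightarrow> 'b::topological_space) \<Rightarrow> bool" where
  "dependency_graph M N E \<xi> \<longleftrightarrow> undirected_graph N E \<and>
     (\<forall>A \<subseteq> N. prob_space.indep_var M
        (PiM A (\<lambda>_. borel)) (\<lambda>\<omega>. \<lambda>i\<in>A. \<xi> i \<omega>)
        (PiM (N - closed_nbhd_set N E A) (\<lambda>_. borel))
        (\<lambda>\<omega>. \<lambda>i\<in>N - closed_nbhd_set N E A. \<xi> i \<omega>))"

definition max_degree :: "'i set \<Rightarrow> ('i \<Rightarrow> 'i \<Rightarrow> bool) \<Rightarrow> nat" where
  "max_degree N E = Max ((\<lambda>i. card (nbhd N E i)) ` N)"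

definition M_const :: "nat \<Rightarrow> real" where
  "M_const p = max 3 (2 * exp 1 * ln (real p) - exp 1)"

end

theory Submission
  imports Defs
begin

text \<open>
  The squared maximum norm is replaced by the smooth surrogate \<open>\<parallel>x\<parallel>\<^sub>2\<^sub>m\<^sup>2\<close>, which satisfies
  \<open>(max\<^sub>k \<bar>x\<^sub>k\<bar>)\<^sup>2 \<le> \<parallel>x\<parallel>\<^sub>2\<^sub>m\<^sup>2 \<le> p\<^sup>1\<^sup>/\<^sup>m (max\<^sub>k \<bar>x\<^sub>k\<bar>)\<^sup>2\<close> and the smoothness inequality
  \<open>\<parallel>x + y\<parallel>\<^sub>2\<^sub>m\<^sup>2 \<le> \<parallel>x\<parallel>\<^sub>2\<^sub>m\<^sup>2 + \<langle>\<nabla>\<parallel>x\<parallel>\<^sub>2\<^sub>m\<^sup>2, y\<rangle> + (2m - 1) \<parallel>y\<parallel>\<^sub>2\<^sub>m\<^sup>2\<close>.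
  Adding a centred vector \<open>X\<close> independent of \<open>S\<close> therefore raises \<open>E \<parallel>S\<parallel>\<^sub>2\<^sub>m\<^sup>2\<close> by at most
  \<open>(2m - 1) E \<parallel>X\<parallel>\<^sub>2\<^sub>m\<^sup>2\<close>, so over a set of pairwise non-adjacent vertices of the dependency graph
  the bound accumulates additively. A greedy colouring splits \<open>N\<close> into \<open>d* + 1\<close> such sets, and
  Cauchy-Schwarz over the colour classes costs one factor \<open>d* + 1\<close>. Finally \<open>m = max 1 \<lfloor>log p\<rfloor>\<close> gives \<open>(2m - 1) p\<^sup>1\<^sup>/\<^sup>m \<le> M\<^sub>p\<close>.
\<close>

section \<open>Real powers and Hoelder's inequality\<close>

lemma power_powr:
  fixes c :: real
  assumes "0 \<le> c" and "n \<noteq> 0"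
  shows "(c ^ n) powr r = c powr (real n * r)"
  using assms by (cases "c = 0") (simp_all add: powr_realpow[symmetric] powr_powr)

lemma even_power_powr_inverse:
  fixes c :: real
  assumes "m \<ge> 1"
  shows "(c ^ (2*m)) powr (1/m) = c\<^sup>2"
proof -
  have "(c ^ (2*m)) powr (1/m) = (\<bar>c\<bar> ^ (2*m)) powr (1/m)"
    by (simp add: power_even_abs)
  also have "\<dots> = \<bar>c\<bar> powr 2"
    using assms by (simp add: power_powr)
  finally show ?thesis
    by (simp add: powr_realpow'[where n=2, simplified])
qed

lemma Holder_sum:
  fixes a b :: "'k \<Rightarrow> real"
  assumes K: "finite K" and pq: "p > 1" "q > 1" "1/p + 1/q = 1"
    and a: "\<And>k. k \<in> K \<Longrightarrow> 0 \<le> a k" and b: "\<And>k. k \<in> K \<Longrightarrow> 0 \<le> b k"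
  shows "(\<Sum>k\<in>K. a k * b k) \<le> (\<Sum>k\<in>K. a k powr p) powr (1/p) * (\<Sum>k\<in>K. b k powr q) powr (1/q)"
proof -
  define A where "A = (\<Sum>k\<in>K. a k powr p) powr (1/p)"
  define B where "B = (\<Sum>k\<in>K. b k powr q) powr (1/q)"
  have Ap: "A powr p = (\<Sum>k\<in>K. a k powr p)" and Bq: "B powr q = (\<Sum>k\<in>K. b k powr q)"
    using pq by (simp_all add: A_def B_def powr_powr sum_nonneg)
  show ?thesis
  proof (cases "A = 0 \<or> B = 0")
    case True
    then have "(\<forall>k\<in>K. a k = 0) \<or> (\<forall>k\<in>K. b k = 0)"
      using K by (auto simp: A_def B_def sum_nonneg_eq_0_iff)
    then show ?thesis
      by auto
  next
    case False
    then have AB: "A > 0" "B > 0"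
      by (auto simp: A_def B_def)
    have "(\<Sum>k\<in>K. (a k / A) * (b k / B)) \<le> (\<Sum>k\<in>K. (a k / A) powr p / p + (b k / B) powr q / q)"
      using a b AB by (intro sum_mono Youngs_inequality[OF pq]) auto
    also have "\<dots> = (\<Sum>k\<in>K. a k powr p) / A powr p / p + (\<Sum>k\<in>K. b k powr q) / B powr q / q"
      by (simp add: powr_divide sum.distrib sum_divide_distrib)
    also have "\<dots> = 1"
      using AB pq(3) by (simp add: Ap[symmetric] Bq[symmetric])
    finally have "(\<Sum>k\<in>K. a k * b k) / (A * B) \<le> 1"
      by (simp add: sum_divide_distrib)
    then show ?thesis
      using AB by (simp add: A_def B_def)
  qed
qed

section \<open>A smooth surrogate for the squared maximum norm\<close>

text \<open>The gradient formula is also correct at \<open>x = 0\<close>, where the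
  junk value \<open>0 powr a = 0\<close> makes it vanish.\<close>

definition sum_pow2m :: "nat \<Rightarrow> real^'n \<Rightarrow> real" where
  "sum_pow2m m x = (\<Sum>k\<in>UNIV. x$k ^ (2*m))"

definition norm2m_sq :: "nat \<Rightarrow> real^'n \<Rightarrow> real" where
  "norm2m_sq m x = sum_pow2m m x powr (1/m)"

definition norm2m_sq_grad :: "nat \<Rightarrow> real^'n \<Rightarrow> real^'n" where
  "norm2m_sq_grad m x = (\<chi> k. 2 * sum_pow2m m x powr (1/m - 1) * x$k ^ (2*m - 1))"

lemma sum_pow2m_nonneg: "0 \<le> sum_pow2m m x"
  unfolding sum_pow2m_def by (intro sum_nonneg) (simp add: zero_le_even_power)

lemma sum_pow2m_eq_0_iff: "m \<ge> 1 \<Longrightarrow> sum_pow2m m x = 0 \<longleftrightarrow> x = 0"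
  unfolding sum_pow2m_def
  by (subst sum_nonneg_eq_0_iff) (auto simp: zero_le_even_power vec_eq_iff)

lemma power_le_sum_pow2m: "x$k ^ (2*m) \<le> sum_pow2m m x"
  unfolding sum_pow2m_def by (rule member_le_sum) (auto simp: zero_le_even_power)

lemma sum_pow2m_scaleR: "sum_pow2m m (c *\<^sub>R x) = c ^ (2*m) * sum_pow2m m x"
  by (simp add: sum_pow2m_def sum_distrib_left power_mult_distrib)

lemma norm2m_sq_nonneg: "0 \<le> norm2m_sq m x"
  by (simp add: norm2m_sq_def)

lemma norm2m_sq_zero: "m \<ge> 1 \<Longrightarrow> norm2m_sq m 0 = 0"
  by (simp add: norm2m_sq_def sum_pow2m_eq_0_iff)

lemma norm2m_sq_scaleR: "m \<ge> 1 \<Longrightarrow> norm2m_sq m (c *\<^sub>R x) = c\<^sup>2 * norm2m_sq m x"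
  by (simp add: norm2m_sq_def sum_pow2m_scaleR powr_mult even_power_powr_inverse)

lemma norm2m_sq_grad_scaleR:
  assumes m: "m \<ge> 1"
  shows "norm2m_sq_grad m (c *\<^sub>R x) = c *\<^sub>R norm2m_sq_grad m x"
proof (cases "c = 0")
  case False
  have "(c ^ (2*m)) powr (1/m - 1) * c ^ (2*m - 1) = c"
  proof -
    have "(c ^ (2*m)) powr (1/m - 1) = (\<bar>c\<bar> ^ (2*m)) powr (1/m - 1)"
      by (simp add: power_even_abs)
    also have "\<dots> = \<bar>c\<bar> powr (real (2*m) * (1/m - 1))"
      using m by (intro power_powr) auto
    also have "real (2*m) * (1/m - 1) = 2 - 2*real m"
      using m by (simp add: field_simps)
    finally have "(c ^ (2*m)) powr (1/m - 1) = \<bar>c\<bar> powr (2 - 2*real m)" .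
    moreover have "c ^ (2*m - 1) = c * \<bar>c\<bar> powr (2*real m - 2)"
    proof -
      have "2*m - 1 = Suc (2*(m - 1))"
        using m by simp
      then have "c ^ (2*m - 1) = c * c ^ (2*(m - 1))"
        by (simp only: power_Suc)
      also have "c ^ (2*(m - 1)) = \<bar>c\<bar> ^ (2*(m - 1))"
        by (simp add: power_even_abs)
      also have "\<dots> = \<bar>c\<bar> powr (2*real m - 2)"
        using m False by (simp add: powr_realpow[symmetric] of_nat_diff)
      finally show ?thesis .
    qed
    ultimately show ?thesis
      using False by (simp add: mult.left_commute powr_add[symmetric])
  qed
  then show ?thesis
    by (simp add: vec_eq_iff norm2m_sq_grad_def sum_pow2m_scaleR powr_mult power_mult_distrib)
qed (use m in \<open>simp add: vec_eq_iff norm2m_sq_grad_def sum_pow2m_def\<close>)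

lemma norm2m_sq_grad_inner_self:
  assumes m: "m \<ge> 1"
  shows "norm2m_sq_grad m x \<bullet> x = 2 * norm2m_sq m x"
proof -
  define U where "U = sum_pow2m m x"
  have "x$k ^ (2*m - 1) * x$k = x$k ^ (2*m)" for k
    using m by (simp add: power_Suc2[symmetric])
  then have "norm2m_sq_grad m x \<bullet> x = 2 * U powr (1/m - 1) * U"
    by (simp add: inner_vec_def norm2m_sq_grad_def U_def sum_pow2m_def sum_distrib_left mult.assoc)
  also have "\<dots> = 2 * U powr (1/m)"
    using sum_pow2m_nonneg[of m x] by (simp add: U_def powr_mult_base mult.commute)
  finally show ?thesis
    by (simp add: U_def norm2m_sq_def)
qed

text \<open>Hoelder's inequality with exponents \<open>m/(m - 1)\<close> and \<open>m\<close>. The positivity hypothesis is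
  needed only for \<open>m = 1\<close>, where \<open>0 powr 0 = 0\<close>.\<close>

lemma sum_pow2m_weighted_le_norm2m_sq:
  fixes x y :: "real^'n"
  assumes m: "m \<ge> 1" and x: "0 < sum_pow2m m x"
  shows "sum_pow2m m x powr (1/m - 1) * (\<Sum>k\<in>UNIV. x$k ^ (2*m - 2) * (y$k)\<^sup>2) \<le> norm2m_sq m y"
proof (cases "m = 1")
  case True
  then show ?thesis
    using x by (simp add: norm2m_sq_def sum_pow2m_def sum_nonneg)
next
  case False
  then have m2: "m \<ge> 2"
    using m by simp
  define p where "p = real m / (real m - 1)"
  have pq: "p > 1" "real m > 1" "1/p + 1/real m = 1"
    using m2 by (auto simp: p_def field_simps)
  have inv_p: "1/p = 1 - 1/m"
    using pq(3) by simp
  have xp: "(x$k ^ (2*m - 2)) powr p = x$k ^ (2*m)" for k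
  proof -
    have e: "real (2*m - 2) * p = real (2*m)"
      using m2 by (simp add: p_def of_nat_diff field_simps)
    have "(x$k ^ (2*m - 2)) powr p = (\<bar>x$k\<bar> ^ (2*m - 2)) powr p"
      by (simp add: power_even_abs)
    also have "\<dots> = \<bar>x$k\<bar> powr (real (2*m - 2) * p)"
      using m2 by (intro power_powr) auto
    also have "\<dots> = \<bar>x$k\<bar> powr real (2*m)"
      by (simp only: e)
    also have "\<dots> = x$k ^ (2*m)"
      by (subst powr_realpow') (use m2 in \<open>simp_all add: power_even_abs\<close>)
    finally show ?thesis .
  qed
  have yq: "((y$k)\<^sup>2) powr real m = y$k ^ (2*m)" for k
    using m by (simp add: powr_realpow' power_mult)
  have "(\<Sum>k\<in>UNIV. x$k ^ (2*m - 2) * (y$k)\<^sup>2)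
      \<le> (\<Sum>k\<in>UNIV. (x$k ^ (2*m - 2)) powr p) powr (1/p) * (\<Sum>k\<in>UNIV. ((y$k)\<^sup>2) powr real m) powr (1/m)"
    using m2 by (intro Holder_sum[OF finite pq]) (simp_all add: zero_le_even_power)
  also have "\<dots> = sum_pow2m m x powr (1 - 1/m) * norm2m_sq m y"
    by (simp only: xp yq inv_p sum_pow2m_def norm2m_sq_def)
  finally have "sum_pow2m m x powr (1/m - 1) * (\<Sum>k\<in>UNIV. x$k ^ (2*m - 2) * (y$k)\<^sup>2)
      \<le> sum_pow2m m x powr (1/m - 1) * (sum_pow2m m x powr (1 - 1/m) * norm2m_sq m y)"
    by (rule mult_left_mono) simp
  also have "\<dots> = norm2m_sq m y"
    using x by (simp add: mult.assoc[symmetric] powr_add[symmetric])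
  finally show ?thesis .
qed

lemma Taylor_second_order_le:
  fixes f f' f'' :: "real \<Rightarrow> real"
  assumes "\<And>t. 0 \<le> t \<Longrightarrow> t \<le> 1 \<Longrightarrow> DERIV f t :> f' t"
    and "\<And>t. 0 \<le> t \<Longrightarrow> t \<le> 1 \<Longrightarrow> DERIV f' t :> f'' t"
    and "\<And>t. 0 \<le> t \<Longrightarrow> t \<le> 1 \<Longrightarrow> f'' t \<le> 2 * C"
  shows "f 1 \<le> f 0 + f' 0 + C"
proof -
  define D :: "nat \<Rightarrow> real \<Rightarrow> real" where "D n = (if n = 0 then f else if n = 1 then f' else f'')" for n
  have "\<exists>t. 0 < t \<and> t < 1 \<and> f 1 = (\<Sum>n<2. D n 0 / fact n * (1 - 0) ^ n) + D 2 t / fact 2 * (1 - 0) ^ 2"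
    by (rule Taylor_up) (use assms in \<open>auto simp: D_def less_2_cases_iff\<close>)
  then obtain t where "0 < t" "t < 1" and "f 1 = f 0 + f' 0 + f'' t / 2"
    by (auto simp: D_def numeral_2_eq_2)
  then show ?thesis
    using assms(3)[of t] by simp
qed

text \<open>Second-order Taylor expansion of \<open>t \<mapsto> \<parallel>x + t y\<parallel>\<^sub>2\<^sub>m\<^sup>2\<close>: in the second derivative the term
  with the squared first derivative is nonpositive, and Hoelder's inequality bounds the rest.\<close>

lemma norm2m_sq_add_le_if_nonvanishing:
  fixes x y :: "real^'n"
  assumes m: "m \<ge> 1" and pos: "\<And>t. 0 \<le> t \<Longrightarrow> t \<le> 1 \<Longrightarrow> 0 < sum_pow2m m (x + t *\<^sub>R y)"
  shows "norm2m_sq m (x + y) \<le> norm2m_sq m x + norm2m_sq_grad m x \<bullet> y + (2*real m - 1) * norm2m_sq m y"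
proof -
  define u where "u t = (\<Sum>k\<in>UNIV. (x$k + t * y$k) ^ (2*m))" for t
  define u1 where "u1 t = (\<Sum>k\<in>UNIV. real (2*m) * (x$k + t * y$k) ^ (2*m - 1) * y$k)" for t
  define w where "w t = (\<Sum>k\<in>UNIV. (x$k + t * y$k) ^ (2*m - 2) * (y$k)\<^sup>2)" for t
  define u2 where "u2 t = real (2*m) * real (2*m - 1) * w t" for t
  have u_eq: "u t = sum_pow2m m (x + t *\<^sub>R y)" for t
    by (simp add: u_def sum_pow2m_def)
  have du: "DERIV u t :> u1 t" for t
    unfolding u_def u1_def by (auto intro!: derivative_eq_intros simp: mult_ac)
  have du1: "DERIV u1 t :> u2 t" for t
  proof -
    have "2*m - 1 - 1 = 2*m - 2"
      by simp
    then show ?thesis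
      unfolding u1_def u2_def w_def
      by (auto intro!: derivative_eq_intros simp: sum_distrib_left power2_eq_square mult_ac)
  qed
  define f1 where "f1 t = (1/m) * u t powr (1/m - 1) * u1 t" for t
  define f2 where "f2 t = (1/m) * ((1/m - 1) * u t powr (1/m - 2) * (u1 t)\<^sup>2 + u t powr (1/m - 1) * u2 t)" for t
  have "norm2m_sq m (x + 1 *\<^sub>R y) \<le> norm2m_sq m (x + 0 *\<^sub>R y) + f1 0 + (2*real m - 1) * norm2m_sq m y"
  proof (rule Taylor_second_order_le)
    fix t :: real assume t: "0 \<le> t" "t \<le> 1"
    then have ut: "0 < u t"
      using pos by (simp add: u_eq)
    show "DERIV (\<lambda>t. norm2m_sq m (x + t *\<^sub>R y)) t :> f1 t"
      using DERIV_fun_powr[OF du ut, of "1/m"] by (simp add: norm2m_sq_def u_eq f1_def)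
    have "DERIV (\<lambda>t. u t powr (1/m - 1)) t :> (1/m - 1) * u t powr (1/m - 2) * u1 t"
      using DERIV_fun_powr[OF du ut, of "1/m - 1"] by (simp add: diff_diff_add)
    from DERIV_cmult[OF DERIV_mult[OF this du1], of "1/m"] show "DERIV f1 t :> f2 t"
      unfolding f1_def f2_def by (simp add: power2_eq_square algebra_simps)
    have "(1/m - 1) * (u t powr (1/m - 2) * (u1 t)\<^sup>2) \<le> 0"
      using m by (intro mult_nonpos_nonneg) simp_all
    then have "f2 t \<le> (1/m) * (u t powr (1/m - 1) * u2 t)"
      unfolding f2_def by (intro mult_left_mono) (simp_all add: mult.assoc)
    also have "\<dots> = 2 * (2*real m - 1) * (u t powr (1/m - 1) * w t)"
      using m by (simp add: u2_def of_nat_diff field_simps)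
    also have "\<dots> \<le> 2 * (2*real m - 1) * norm2m_sq m y"
      using m ut sum_pow2m_weighted_le_norm2m_sq[OF m, of "x + t *\<^sub>R y" y]
      by (intro mult_left_mono) (simp_all add: u_eq w_def)
    finally show "f2 t \<le> 2 * ((2*real m - 1) * norm2m_sq m y)"
      by (simp only: mult.assoc)
  qed
  moreover have "f1 0 = norm2m_sq_grad m x \<bullet> y"
    using m by (simp add: f1_def u_def u1_def inner_vec_def norm2m_sq_grad_def sum_pow2m_def
        sum_distrib_left mult_ac)
  ultimately show ?thesis
    by simp
qed

lemma norm2m_sq_add_le_if_collinear:
  assumes m: "m \<ge> 1"
  shows "norm2m_sq m (c *\<^sub>R y + y)
    \<le> norm2m_sq m (c *\<^sub>R y) + norm2m_sq_grad m (c *\<^sub>R y) \<bullet> y + (2*real m - 1) * norm2m_sq m y"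
proof -
  have "c *\<^sub>R y + y = (1 + c) *\<^sub>R y"
    by (simp add: algebra_simps)
  moreover have "norm2m_sq_grad m (c *\<^sub>R y) \<bullet> y = 2 * c * norm2m_sq m y"
    using m by (simp add: norm2m_sq_grad_scaleR norm2m_sq_grad_inner_self)
  moreover have "(1 + c)\<^sup>2 * norm2m_sq m y \<le> c\<^sup>2 * norm2m_sq m y + 2 * c * norm2m_sq m y + (2*real m - 1) * norm2m_sq m y"
  proof -
    have "c\<^sup>2 * norm2m_sq m y + 2 * c * norm2m_sq m y + (2*real m - 1) * norm2m_sq m y - (1 + c)\<^sup>2 * norm2m_sq m y
        = (2*real m - 2) * norm2m_sq m y"
      by (simp add: power2_eq_square algebra_simps)
    moreover have "0 \<le> (2*real m - 2) * norm2m_sq m y"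
      using m by (simp add: norm2m_sq_nonneg)
    ultimately show ?thesis
      by linarith
  qed
  ultimately show ?thesis
    using m by (simp add: norm2m_sq_scaleR)
qed

text \<open>\<open>powr\<close> is differentiable only away from \<open>0\<close>; if the segment from \<open>x\<close> to \<open>x + y\<close> meets
  \<open>0\<close>, then \<open>x\<close> is a multiple of \<open>y\<close> and homogeneity settles the inequality.\<close>

theorem norm2m_sq_add_le:
  assumes m: "m \<ge> 1"
  shows "norm2m_sq m (x + y) \<le> norm2m_sq m x + norm2m_sq_grad m x \<bullet> y + (2*real m - 1) * norm2m_sq m y"
proof (cases "\<forall>t. 0 \<le> t \<and> t \<le> 1 \<longrightarrow> 0 < sum_pow2m m (x + t *\<^sub>R y)")
  case True
  then show ?thesis
    by (intro norm2m_sq_add_le_if_nonvanishing m) auto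
next
  case False
  then obtain t where "sum_pow2m m (x + t *\<^sub>R y) = 0"
    using sum_pow2m_nonneg by (metis less_eq_real_def)
  then have x: "x = (- t) *\<^sub>R y"
    using m by (simp add: sum_pow2m_eq_0_iff add_eq_0_iff2)
  show ?thesis
    unfolding x by (rule norm2m_sq_add_le_if_collinear[OF m])
qed

lemma abs_norm2m_sq_grad_le:
  assumes m: "m \<ge> 1"
  shows "\<bar>norm2m_sq_grad m x $ k\<bar> \<le> 2 * sqrt (norm2m_sq m x)"
proof -
  define U where "U = sum_pow2m m x"
  have U: "0 \<le> U"
    by (simp add: U_def sum_pow2m_nonneg)
  have "\<bar>x$k\<bar> powr real (2*m) = x$k ^ (2*m)"
    by (subst powr_realpow') (use m in \<open>simp_all add: power_even_abs\<close>)
  then have "\<bar>x$k\<bar> powr real (2*m) \<le> U"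
    using power_le_sum_pow2m[of x k m] by (simp add: U_def)
  then have "(\<bar>x$k\<bar> powr real (2*m)) powr (1/(2*m)) \<le> U powr (1/(2*m))"
    by (intro powr_mono2) auto
  then have xk: "\<bar>x$k\<bar> \<le> U powr (1/(2*m))"
    using m by (simp add: powr_powr)
  have "\<bar>norm2m_sq_grad m x $ k\<bar> = 2 * U powr (1/m - 1) * \<bar>x$k\<bar> ^ (2*m - 1)"
    by (simp add: norm2m_sq_grad_def U_def abs_mult power_abs)
  also have "\<dots> \<le> 2 * U powr (1/m - 1) * (U powr (1/(2*m))) ^ (2*m - 1)"
    using xk by (intro mult_left_mono power_mono) auto
  also have "\<dots> = 2 * U powr (1/(2*m))"
  proof (cases "U = 0")
    case False
    have "(1/m - 1) + real (2*m - 1) * (1/(2*m)) = 1/(2*m)"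
      using m by (simp add: of_nat_diff field_simps)
    then show ?thesis
      using False by (simp add: powr_power powr_add[symmetric])
  qed (use m in simp)
  also have "U powr (1/(2*m)) = sqrt (norm2m_sq m x)"
    using U by (simp add: norm2m_sq_def U_def powr_half_sqrt[symmetric] powr_powr mult.commute)
  finally show ?thesis .
qed

lemma Max_abs_sq_le_norm2m_sq:
  assumes m: "m \<ge> 1"
  shows "(MAX k. \<bar>x$k\<bar>)\<^sup>2 \<le> norm2m_sq m x"
proof -
  have "(MAX k. \<bar>x$k\<bar>) \<in> range (\<lambda>k. \<bar>x$k\<bar>)"
    by (rule Max_in) auto
  then obtain k where k: "(MAX k. \<bar>x$k\<bar>) = \<bar>x$k\<bar>"
    by blast
  have "(x$k ^ (2*m)) powr (1/m) \<le> sum_pow2m m x powr (1/m)"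
    by (intro powr_mono2 power_le_sum_pow2m) (auto simp: zero_le_even_power)
  then show ?thesis
    using m k by (simp add: norm2m_sq_def even_power_powr_inverse)
qed

lemma norm2m_sq_le_Max_abs_sq:
  fixes x :: "real^'n"
  assumes m: "m \<ge> 1"
  shows "norm2m_sq m x \<le> real CARD('n) powr (1/m) * (MAX k. \<bar>x$k\<bar>)\<^sup>2"
proof -
  define B where "B = (MAX k. \<bar>x$k\<bar>)"
  have "x$k ^ (2*m) \<le> B ^ (2*m)" for k
    using Max_ge[of "range (\<lambda>k. \<bar>x$k\<bar>)" "\<bar>x$k\<bar>"]
    by (subst power_even_abs[symmetric]) (auto simp: B_def intro!: power_mono)
  then have "sum_pow2m m x \<le> real CARD('n) * B ^ (2*m)"
    using sum_mono[of UNIV "\<lambda>k. x$k ^ (2*m)" "\<lambda>_. B ^ (2*m)"] by (simp add: sum_pow2m_def)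
  then have "norm2m_sq m x \<le> (real CARD('n) * B ^ (2*m)) powr (1/m)"
    unfolding norm2m_sq_def by (intro powr_mono2) (simp_all add: sum_pow2m_nonneg)
  then show ?thesis
    using m by (simp add: powr_mult even_power_powr_inverse B_def)
qed

lemma Max_abs_sum_sq_le:
  fixes T :: "'c \<Rightarrow> real^'n"
  assumes C: "finite C"
  shows "(MAX k. \<bar>(\<Sum>c\<in>C. T c)$k\<bar>)\<^sup>2 \<le> card C * (\<Sum>c\<in>C. (MAX k. \<bar>T c $ k\<bar>)\<^sup>2)"
proof -
  define a where "a c = (MAX k. \<bar>T c $ k\<bar>)" for c
  have "\<bar>(\<Sum>c\<in>C. T c)$k\<bar> \<le> (\<Sum>c\<in>C. a c)" for k
  proof -
    have "\<bar>(\<Sum>c\<in>C. T c)$k\<bar> \<le> (\<Sum>c\<in>C. \<bar>T c $ k\<bar>)"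
      by (simp add: sum_abs)
    also have "\<dots> \<le> (\<Sum>c\<in>C. a c)"
      by (intro sum_mono) (simp add: a_def)
    finally show ?thesis .
  qed
  then have "(MAX k. \<bar>(\<Sum>c\<in>C. T c)$k\<bar>) \<le> (\<Sum>c\<in>C. a c)"
    by (subst Max_le_iff) auto
  moreover have "0 \<le> (MAX k. \<bar>(\<Sum>c\<in>C. T c)$k\<bar>)"
    by (rule order_trans[OF abs_ge_zero Max_ge]) auto
  ultimately have "(MAX k. \<bar>(\<Sum>c\<in>C. T c)$k\<bar>)\<^sup>2 \<le> (\<Sum>c\<in>C. a c * 1)\<^sup>2"
    by (simp add: power_mono)
  also have "\<dots> \<le> (\<Sum>c\<in>C. (a c)\<^sup>2) * (\<Sum>c\<in>C. 1\<^sup>2)"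
    by (rule Cauchy_Schwarz_ineq_sum)
  finally show ?thesis
    by (simp add: a_def mult.commute)
qed

lemma borel_measurable_norm2m_sq[measurable]: "norm2m_sq m \<in> borel_measurable borel"
  unfolding norm2m_sq_def sum_pow2m_def by measurable

lemma borel_measurable_norm2m_sq_grad[measurable]:
  "(\<lambda>x. norm2m_sq_grad m x $ k) \<in> borel_measurable borel"
  unfolding norm2m_sq_grad_def sum_pow2m_def vec_lambda_beta by measurable

section \<open>Sums of random vectors with a dependency graph\<close>

lemma (in prob_space) integrable_norm2m_sq_grad:
  fixes S :: "'a \<Rightarrow> real^'n"
  assumes m: "m \<ge> 1" and [measurable]: "S \<in> borel_measurable M"
    and HS: "integrable M (\<lambda>\<omega>. norm2m_sq m (S \<omega>))"
  shows "integrable M (\<lambda>\<omega>. norm2m_sq_grad m (S \<omega>) $ k)"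
proof (rule Bochner_Integration.integrable_bound[OF Bochner_Integration.integrable_add[OF integrable_const HS]])
  show "AE \<omega> in M. norm (norm2m_sq_grad m (S \<omega>) $ k) \<le> norm (1 + norm2m_sq m (S \<omega>))"
  proof (rule AE_I2)
    fix \<omega>
    have "2 * sqrt (norm2m_sq m (S \<omega>)) \<le> 1 + norm2m_sq m (S \<omega>)"
      using arith_geo_mean_sqrt[of 1 "norm2m_sq m (S \<omega>)"] by (simp add: norm2m_sq_nonneg)
    then show "norm (norm2m_sq_grad m (S \<omega>) $ k) \<le> norm (1 + norm2m_sq m (S \<omega>))"
      using abs_norm2m_sq_grad_le[OF m, of "S \<omega>" k] by (simp add: norm2m_sq_nonneg)
  qed
qed measurable

lemma (in prob_space) integral_norm2m_sq_add_indep_le: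
  fixes S X :: "'a \<Rightarrow> real^'n"
  assumes m: "m \<ge> 1"
    and [measurable]: "S \<in> borel_measurable M" "X \<in> borel_measurable M"
    and indep: "indep_var borel S borel X"
    and X_int: "\<And>k. integrable M (\<lambda>\<omega>. X \<omega> $ k)" and X_centred: "\<And>k. (\<integral>\<omega>. X \<omega> $ k \<partial>M) = 0"
    and HS: "integrable M (\<lambda>\<omega>. norm2m_sq m (S \<omega>))" and HX: "integrable M (\<lambda>\<omega>. norm2m_sq m (X \<omega>))"
  shows "integrable M (\<lambda>\<omega>. norm2m_sq m (S \<omega> + X \<omega>))"
    and "(\<integral>\<omega>. norm2m_sq m (S \<omega> + X \<omega>) \<partial>M)
      \<le> (\<integral>\<omega>. norm2m_sq m (S \<omega>) \<partial>M) + (2*real m - 1) * (\<integral>\<omega>. norm2m_sq m (X \<omega>) \<partial>M)"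
proof -
  have grad_int: "integrable M (\<lambda>\<omega>. norm2m_sq_grad m (S \<omega>) $ k)" for k
    by (rule integrable_norm2m_sq_grad[OF m _ HS]) measurable
  have indep_k: "indep_var borel (\<lambda>\<omega>. norm2m_sq_grad m (S \<omega>) $ k) borel (\<lambda>\<omega>. X \<omega> $ k)" for k
    using indep_var_compose[OF indep borel_measurable_norm2m_sq_grad[of m k], of "\<lambda>x. x $ k"]
    by (simp add: comp_def)
  have prod_int: "integrable M (\<lambda>\<omega>. norm2m_sq_grad m (S \<omega>) $ k * X \<omega> $ k)" for k
    using indep_var_integrable[OF indep_k grad_int X_int] .
  have prod_centred: "(\<integral>\<omega>. norm2m_sq_grad m (S \<omega>) $ k * X \<omega> $ k \<partial>M) = 0" for k
    using indep_var_lebesgue_integral[OF indep_k grad_int X_int] by (simp add: X_centred)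
  define R where "R \<omega> = norm2m_sq m (S \<omega>) + norm2m_sq_grad m (S \<omega>) \<bullet> X \<omega> + (2*real m - 1) * norm2m_sq m (X \<omega>)"
    for \<omega>
  have R_int: "integrable M R"
    unfolding R_def inner_vec_def using HS HX prod_int by auto
  have le_R: "norm2m_sq m (S \<omega> + X \<omega>) \<le> R \<omega>" for \<omega>
    unfolding R_def by (rule norm2m_sq_add_le[OF m])
  show "integrable M (\<lambda>\<omega>. norm2m_sq m (S \<omega> + X \<omega>))"
  proof (rule Bochner_Integration.integrable_bound[OF R_int])
    show "AE \<omega> in M. norm (norm2m_sq m (S \<omega> + X \<omega>)) \<le> norm (R \<omega>)"
      using le_R order_trans[OF norm2m_sq_nonneg le_R] by (intro AE_I2) (simp add: norm2m_sq_nonneg)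
  qed measurable
  have "(\<integral>\<omega>. norm2m_sq m (S \<omega> + X \<omega>) \<partial>M) \<le> (\<integral>\<omega>. R \<omega> \<partial>M)"
    using le_R by (intro integral_mono' R_int) (auto intro: order_trans[OF norm2m_sq_nonneg])
  also have "\<dots> = (\<integral>\<omega>. norm2m_sq m (S \<omega>) \<partial>M) + (2*real m - 1) * (\<integral>\<omega>. norm2m_sq m (X \<omega>) \<partial>M)"
    unfolding R_def inner_vec_def using HS HX prod_int by (simp add: prod_centred)
  finally show "(\<integral>\<omega>. norm2m_sq m (S \<omega> + X \<omega>) \<partial>M)
      \<le> (\<integral>\<omega>. norm2m_sq m (S \<omega>) \<partial>M) + (2*real m - 1) * (\<integral>\<omega>. norm2m_sq m (X \<omega>) \<partial>M)" .
qed

lemma (in prob_space) indep_var_sum_dependency_graph: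
  fixes \<xi> :: "'i \<Rightarrow> 'a \<Rightarrow> 'b::{second_countable_topology, topological_comm_monoid_add}"
  assumes dep: "dependency_graph M N E \<xi>" and A: "A \<subseteq> N"
    and j: "j \<in> N - closed_nbhd_set N E A"
  shows "indep_var borel (\<lambda>\<omega>. \<Sum>i\<in>A. \<xi> i \<omega>) borel (\<xi> j)"
proof -
  define B where "B = N - closed_nbhd_set N E A"
  have "indep_var (PiM A (\<lambda>_. borel)) (\<lambda>\<omega>. \<lambda>i\<in>A. \<xi> i \<omega>) (PiM B (\<lambda>_. borel)) (\<lambda>\<omega>. \<lambda>i\<in>B. \<xi> i \<omega>)"
    using dep A unfolding dependency_graph_def B_def by blast
  moreover have "(\<lambda>f. \<Sum>i\<in>A. f i) \<in> borel_measurable (PiM A (\<lambda>_. borel :: 'b measure))"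
    by measurable
  moreover have "(\<lambda>f. f j) \<in> borel_measurable (PiM B (\<lambda>_. borel :: 'b measure))"
    using j by (simp add: B_def)
  ultimately have "indep_var borel (\<lambda>\<omega>. \<Sum>i\<in>A. (\<lambda>i\<in>A. \<xi> i \<omega>) i) borel (\<lambda>\<omega>. (\<lambda>i\<in>B. \<xi> i \<omega>) j)"
    by (rule indep_var_compose[unfolded comp_def])
  then show ?thesis
    using j by (simp add: B_def)
qed

lemma (in prob_space) integral_norm2m_sq_sum_independent_set:
  fixes \<xi> :: "'i \<Rightarrow> 'a \<Rightarrow> real^'n"
  assumes m: "m \<ge> 1" and dep: "dependency_graph M N E \<xi>"
    and meas: "\<And>i. i \<in> N \<Longrightarrow> \<xi> i \<in> borel_measurable M"
    and mean0: "\<And>i k. i \<in> N \<Longrightarrow> integrable M (\<lambda>\<omega>. \<xi> i \<omega> $ k) \<and> (\<integral>\<omega>. \<xi> i \<omega> $ k \<partial>M) = 0"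
    and H_int: "\<And>i. i \<in> N \<Longrightarrow> integrable M (\<lambda>\<omega>. norm2m_sq m (\<xi> i \<omega>))"
    and C: "finite C" "C \<subseteq> N" and no_edges: "\<And>i j. i \<in> C \<Longrightarrow> j \<in> C \<Longrightarrow> \<not> E i j"
  shows "integrable M (\<lambda>\<omega>. norm2m_sq m (\<Sum>i\<in>C. \<xi> i \<omega>)) \<and>
    (\<integral>\<omega>. norm2m_sq m (\<Sum>i\<in>C. \<xi> i \<omega>) \<partial>M) \<le> (2*real m - 1) * (\<Sum>i\<in>C. \<integral>\<omega>. norm2m_sq m (\<xi> i \<omega>) \<partial>M)"
  using C no_edges
proof (induction C rule: finite_induct)
  case empty
  then show ?case
    by (simp add: norm2m_sq_zero[OF m])
next
  case (insert j C)
  then have j: "j \<in> N" and IH: "integrable M (\<lambda>\<omega>. norm2m_sq m (\<Sum>i\<in>C. \<xi> i \<omega>))"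
    "(\<integral>\<omega>. norm2m_sq m (\<Sum>i\<in>C. \<xi> i \<omega>) \<partial>M) \<le> (2*real m - 1) * (\<Sum>i\<in>C. \<integral>\<omega>. norm2m_sq m (\<xi> i \<omega>) \<partial>M)"
    by auto
  have "j \<in> N - closed_nbhd_set N E C"
    using insert j unfolding closed_nbhd_set_def nbhd_def by auto
  then have indep: "indep_var borel (\<lambda>\<omega>. \<Sum>i\<in>C. \<xi> i \<omega>) borel (\<xi> j)"
    using insert by (intro indep_var_sum_dependency_graph[OF dep]) auto
  have "(\<lambda>\<omega>. \<Sum>i\<in>C. \<xi> i \<omega>) \<in> borel_measurable M"
    using insert meas by (intro borel_measurable_sum) auto
  note step = integral_norm2m_sq_add_indep_le[OF m this meas[OF j] indep
      conjunct1[OF mean0[OF j]] conjunct2[OF mean0[OF j]] IH(1) H_int[OF j]]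
  have sum_insert: "(\<Sum>i\<in>insert j C. \<xi> i \<omega>) = (\<Sum>i\<in>C. \<xi> i \<omega>) + \<xi> j \<omega>" for \<omega>
    using insert by (simp add: add.commute)
  show ?case
    unfolding sum_insert using step IH(2) insert by (simp add: algebra_simps)
qed

lemma undirected_graph_colouring:
  assumes G: "undirected_graph N E" and N: "finite N"
    and deg: "\<And>i. i \<in> N \<Longrightarrow> card (nbhd N E i) \<le> d"
  obtains col :: "'i \<Rightarrow> nat"
  where "\<And>i. i \<in> N \<Longrightarrow> col i \<le> d" and "\<And>i j. i \<in> N \<Longrightarrow> j \<in> N \<Longrightarrow> E i j \<Longrightarrow> col i \<noteq> col j"
proof -
  have "\<exists>col :: 'i \<Rightarrow> nat. (\<forall>i\<in>F. col i \<le> d) \<and> (\<forall>i\<in>F. \<forall>j\<in>F. E i j \<longrightarrow> col i \<noteq> col j)"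
    if "finite F" "F \<subseteq> N" for F
    using that
  proof (induction F rule: finite_subset_induct')
    case (insert a F)
    then obtain col where col: "\<forall>i\<in>F. col i \<le> d" "\<forall>i\<in>F. \<forall>j\<in>F. E i j \<longrightarrow> col i \<noteq> col j"
      by blast
    define used where "used = col ` (nbhd N E a \<inter> F)"
    have "card used \<le> card (nbhd N E a)"
      unfolding used_def using N
      by (intro card_image_le[THEN order_trans] card_mono) (auto simp: nbhd_def)
    then have "card used < card {..d}"
      using deg[OF insert(2)] by simp
    moreover have "finite used"
      using N by (simp add: used_def nbhd_def)
    ultimately have "\<not> {..d} \<subseteq> used"
      using card_mono not_le by blast
    then obtain c where c: "c \<le> d" "c \<notin> used"
      by auto
    have E_sym: "E i j \<Longrightarrow> E j i" and E_irrefl: "\<not> E i i" for i j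
      using G by (auto simp: undirected_graph_def)
    have fresh: "c \<noteq> col j" if "j \<in> F" "E a j \<or> E j a" for j
      using c insert(3) E_sym that by (auto simp: used_def nbhd_def)
    show ?case
    proof (intro exI[of _ "col(a := c)"] conjI ballI impI)
      fix i assume "i \<in> insert a F"
      then show "(col(a := c)) i \<le> d"
        using col c by auto
    next
      fix i j assume "i \<in> insert a F" "j \<in> insert a F" "E i j"
      then show "(col(a := c)) i \<noteq> (col(a := c)) j"
        using col(2) E_irrefl fresh[of i] fresh[of j] insert(4) by (cases "i = a"; cases "j = a") auto
    qed
  qed simp
  then have "\<exists>col :: 'i \<Rightarrow> nat. (\<forall>i\<in>N. col i \<le> d) \<and> (\<forall>i\<in>N. \<forall>j\<in>N. E i j \<longrightarrow> col i \<noteq> col j)"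
    using N by blast
  then show ?thesis
    using that by blast
qed

lemma (in prob_space) integral_norm2m_sq_le_Max_abs_sq:
  fixes X :: "'a \<Rightarrow> real^'n"
  assumes m: "m \<ge> 1" and [measurable]: "X \<in> borel_measurable M"
    and int: "integrable M (\<lambda>\<omega>. (MAX k. \<bar>X \<omega> $ k\<bar>)\<^sup>2)"
  shows "integrable M (\<lambda>\<omega>. norm2m_sq m (X \<omega>))"
    and "(\<integral>\<omega>. norm2m_sq m (X \<omega>) \<partial>M) \<le> real CARD('n) powr (1/m) * (\<integral>\<omega>. (MAX k. \<bar>X \<omega> $ k\<bar>)\<^sup>2 \<partial>M)"
proof -
  have int': "integrable M (\<lambda>\<omega>. real CARD('n) powr (1/m) * (MAX k. \<bar>X \<omega> $ k\<bar>)\<^sup>2)"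
    using int by simp
  show "integrable M (\<lambda>\<omega>. norm2m_sq m (X \<omega>))"
    by (rule Bochner_Integration.integrable_bound[OF int'])
      (use norm2m_sq_le_Max_abs_sq[OF m] in \<open>auto intro!: AE_I2 simp: norm2m_sq_nonneg\<close>)
  have "(\<integral>\<omega>. norm2m_sq m (X \<omega>) \<partial>M) \<le> (\<integral>\<omega>. real CARD('n) powr (1/m) * (MAX k. \<bar>X \<omega> $ k\<bar>)\<^sup>2 \<partial>M)"
    by (intro integral_mono' int' norm2m_sq_le_Max_abs_sq[OF m]) simp
  then show "(\<integral>\<omega>. norm2m_sq m (X \<omega>) \<partial>M) \<le> real CARD('n) powr (1/m) * (\<integral>\<omega>. (MAX k. \<bar>X \<omega> $ k\<bar>)\<^sup>2 \<partial>M)"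
    by simp
qed

lemma (in prob_space) integral_Max_abs_sum_sq_le:
  fixes \<xi> :: "'i \<Rightarrow> 'a \<Rightarrow> real^'n"
  assumes N: "finite N" and m: "m \<ge> 1" and dep: "dependency_graph M N E \<xi>"
    and meas: "\<And>i. i \<in> N \<Longrightarrow> \<xi> i \<in> borel_measurable M"
    and mean0: "\<And>i k. i \<in> N \<Longrightarrow> integrable M (\<lambda>\<omega>. \<xi> i \<omega> $ k) \<and> (\<integral>\<omega>. \<xi> i \<omega> $ k \<partial>M) = 0"
    and mom2: "\<And>i. i \<in> N \<Longrightarrow> integrable M (\<lambda>\<omega>. (MAX k. \<bar>\<xi> i \<omega> $ k\<bar>)\<^sup>2)"
    and deg: "\<And>i. i \<in> N \<Longrightarrow> card (nbhd N E i) \<le> d"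
  shows "(\<integral>\<omega>. (MAX k. \<bar>\<Sum>i\<in>N. \<xi> i \<omega> $ k\<bar>)\<^sup>2 \<partial>M)
    \<le> (real d + 1) * ((2*real m - 1) * real CARD('n) powr (1/m)) * (\<Sum>i\<in>N. \<integral>\<omega>. (MAX k. \<bar>\<xi> i \<omega> $ k\<bar>)\<^sup>2 \<partial>M)"
proof -
  have "undirected_graph N E"
    using dep by (simp add: dependency_graph_def)
  then obtain col :: "'i \<Rightarrow> nat"
    where col: "\<And>i. i \<in> N \<Longrightarrow> col i \<le> d" "\<And>i j. i \<in> N \<Longrightarrow> j \<in> N \<Longrightarrow> E i j \<Longrightarrow> col i \<noteq> col j"
    using undirected_graph_colouring[OF _ N deg] by blast
  define C where "C c = {i \<in> N. col i = c}" for c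
  define T where "T c \<omega> = (\<Sum>i\<in>C c. \<xi> i \<omega>)" for c \<omega>
  note H_int = integral_norm2m_sq_le_Max_abs_sq(1)[OF m meas mom2]
  have class_bound: "integrable M (\<lambda>\<omega>. norm2m_sq m (T c \<omega>)) \<and>
      (\<integral>\<omega>. norm2m_sq m (T c \<omega>) \<partial>M) \<le> (2*real m - 1) * (\<Sum>i\<in>C c. \<integral>\<omega>. norm2m_sq m (\<xi> i \<omega>) \<partial>M)" for c
    unfolding T_def using N col(2)
    by (intro integral_norm2m_sq_sum_independent_set[OF m dep meas mean0 H_int]) (fastforce simp: C_def)+
  have regroup: "(\<Sum>c\<in>{..d}. \<Sum>i\<in>C c. f i) = (\<Sum>i\<in>N. f i)" for f :: "'i \<Rightarrow> 'b::comm_monoid_add"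
    unfolding C_def by (rule sum.group[OF N]) (use col(1) in auto)
  have pointwise: "(MAX k. \<bar>\<Sum>i\<in>N. \<xi> i \<omega> $ k\<bar>)\<^sup>2 \<le> (real d + 1) * (\<Sum>c\<in>{..d}. norm2m_sq m (T c \<omega>))" for \<omega>
  proof -
    have "(\<Sum>i\<in>N. \<xi> i \<omega>) = (\<Sum>c\<in>{..d}. T c \<omega>)"
      unfolding T_def by (rule regroup[symmetric])
    then have "(\<Sum>i\<in>N. \<xi> i \<omega> $ k) = (\<Sum>c\<in>{..d}. T c \<omega> $ k)" for k
      by (metis sum_component)
    then have "(MAX k. \<bar>\<Sum>i\<in>N. \<xi> i \<omega> $ k\<bar>)\<^sup>2 \<le> (real d + 1) * (\<Sum>c\<in>{..d}. (MAX k. \<bar>T c \<omega> $ k\<bar>)\<^sup>2)"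
      using Max_abs_sum_sq_le[of "{..d}" "\<lambda>c. T c \<omega>"] by (simp add: algebra_simps)
    also have "\<dots> \<le> (real d + 1) * (\<Sum>c\<in>{..d}. norm2m_sq m (T c \<omega>))"
      by (intro mult_left_mono sum_mono Max_abs_sq_le_norm2m_sq[OF m]) auto
    finally show ?thesis .
  qed
  have "(\<integral>\<omega>. (MAX k. \<bar>\<Sum>i\<in>N. \<xi> i \<omega> $ k\<bar>)\<^sup>2 \<partial>M)
      \<le> (\<integral>\<omega>. (real d + 1) * (\<Sum>c\<in>{..d}. norm2m_sq m (T c \<omega>)) \<partial>M)"
    using class_bound pointwise by (intro integral_mono') (auto intro!: mult_nonneg_nonneg sum_nonneg simp: norm2m_sq_nonneg)
  also have "\<dots> = (real d + 1) * (\<Sum>c\<in>{..d}. \<integral>\<omega>. norm2m_sq m (T c \<omega>) \<partial>M)"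
    using class_bound by (simp add: integral_sum)
  also have "\<dots> \<le> (real d + 1) * (\<Sum>c\<in>{..d}. (2*real m - 1) * (\<Sum>i\<in>C c. \<integral>\<omega>. norm2m_sq m (\<xi> i \<omega>) \<partial>M))"
    using class_bound by (intro mult_left_mono sum_mono) auto
  also have "\<dots> = (real d + 1) * (2*real m - 1) * (\<Sum>i\<in>N. \<integral>\<omega>. norm2m_sq m (\<xi> i \<omega>) \<partial>M)"
    by (simp add: sum_distrib_left[symmetric] regroup)
  also have "\<dots> \<le> (real d + 1) * (2*real m - 1) * (\<Sum>i\<in>N. real CARD('n) powr (1/m) * (\<integral>\<omega>. (MAX k. \<bar>\<xi> i \<omega> $ k\<bar>)\<^sup>2 \<partial>M))"
    using m integral_norm2m_sq_le_Max_abs_sq(2)[OF m meas mom2] by (intro mult_left_mono sum_mono) auto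
  also have "\<dots> = (real d + 1) * ((2*real m - 1) * real CARD('n) powr (1/m))
      * (\<Sum>i\<in>N. \<integral>\<omega>. (MAX k. \<bar>\<xi> i \<omega> $ k\<bar>)\<^sup>2 \<partial>M)"
    by (simp only: sum_distrib_left[symmetric] mult.assoc)
  finally show ?thesis .
qed

section \<open>The constant \<open>M\<^sub>p\<close>\<close>

lemma exp_double_mult_one_minus_le:
  fixes a :: real
  assumes "0 \<le> a"
  shows "exp (2*a) * (1 - a) \<le> 1 + a"
proof -
  define g where "g x = (1 + x) * exp (- x) - (1 - x) * exp x" for x :: real
  have "g 0 \<le> g a"
  proof (rule DERIV_nonneg_imp_nondecreasing[OF assms])
    fix x :: real assume "0 \<le> x" "x \<le> a"
    then have "0 \<le> x * (exp x - exp (- x))"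
      by simp
    moreover have "DERIV g x :> x * (exp x - exp (- x))"
      unfolding g_def by (auto intro!: derivative_eq_intros simp: algebra_simps)
    ultimately show "\<exists>y. DERIV g x :> y \<and> y \<ge> 0"
      by blast
  qed
  moreover have "g 0 = 0"
    by (simp add: g_def)
  ultimately have "(1 - a) * exp a \<le> (1 + a) * exp (- a)"
    unfolding g_def by linarith
  have "exp (2*a) * (1 - a) = ((1 - a) * exp a) * exp a"
    by (metis exp_add mult_2 mult.commute mult.assoc)
  also have "\<dots> \<le> ((1 + a) * exp (- a)) * exp a"
    by (rule mult_right_mono) (use \<open>(1 - a) * exp a \<le> _\<close> in simp_all)
  also have "\<dots> = 1 + a"
    by (simp add: exp_minus)
  finally show ?thesis .
qed

text \<open>This Pade-type bound is what yields the constant \<open>2e log p - e\<close>; the cruder bound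
  \<open>exp (1/m) \<le> m/(m - 1)\<close> would not suffice.\<close>

lemma exp_inverse_le:
  assumes m: "m \<ge> 1"
  shows "exp (1/m) \<le> (2*real m + 1) / (2*real m - 1)"
proof -
  have "exp (2 * (1/(2*m))) * (1 - 1/(2*m)) \<le> 1 + 1/(2*m)"
    by (rule exp_double_mult_one_minus_le) simp
  then have "2*real m * (exp (1/m) * (1 - 1/(2*m))) \<le> 2*real m * (1 + 1/(2*m))"
    by (intro mult_left_mono) simp_all
  then have "exp (1/m) * (2*real m - 1) \<le> 2*real m + 1"
    using m by (simp add: algebra_simps)
  then show ?thesis
    using m by (simp add: pos_le_divide_eq)
qed

lemma exp_div_le_between_floor:
  fixes L :: real
  assumes m: "m \<ge> 1" and L: "real m \<le> L" "L \<le> real m + 1"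
  shows "(2*real m - 1) * exp (L/m) \<le> exp 1 * (2*L - 1)"
proof -
  define \<theta> where "\<theta> = L - real m"
  have \<theta>: "0 \<le> \<theta>" "\<theta> \<le> 1"
    using L by (simp_all add: \<theta>_def)
  have "exp (\<theta>/m) \<le> (1 - \<theta>) * exp 0 + \<theta> * exp (1/m)"
    using convex_onD[OF exp_convex, of \<theta> 0 "1/m"] \<theta> by simp
  also have "\<dots> \<le> (1 - \<theta>) + \<theta> * ((2*real m + 1) / (2*real m - 1))"
    using \<theta> exp_inverse_le[OF m] by (intro add_mono mult_left_mono) auto
  finally have "(2*real m - 1) * exp (\<theta>/m) \<le> (2*real m - 1) * ((1 - \<theta>) + \<theta> * ((2*real m + 1) / (2*real m - 1)))"
    using m by (intro mult_left_mono) simp_all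
  also have "\<dots> = 2*L - 1"
    using m by (simp add: \<theta>_def field_simps)
  finally have "(2*real m - 1) * exp (\<theta>/m) \<le> 2*L - 1" .
  moreover have "exp (L/m) = exp 1 * exp (\<theta>/m)"
    using m by (simp add: \<theta>_def exp_add[symmetric] diff_divide_distrib)
  ultimately show ?thesis
    by (metis mult.left_commute mult_left_mono exp_ge_zero)
qed

lemma M_const_bound:
  assumes p: "p \<ge> 1"
  obtains m where "m \<ge> 1" and "(2*real m - 1) * real p powr (1/m) \<le> M_const p"
proof (cases "ln (real p) < 1")
  case True
  have "real p = exp (ln (real p))"
    using p by simp
  also have "\<dots> < exp 1"
    using True by simp
  finally have "real p \<le> 3"
    using exp_le by linarith
  then have "(2*real 1 - 1) * real p powr (1/real 1) \<le> M_const p"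
    by (simp add: M_const_def)
  then show ?thesis
    by (rule that[rotated]) simp
next
  case False
  define m where "m = nat \<lfloor>ln (real p)\<rfloor>"
  have m: "m \<ge> 1" "real m \<le> ln (real p)" "ln (real p) \<le> real m + 1"
    using False by (simp_all add: m_def le_nat_floor)
  have "(2*real m - 1) * real p powr (1/m) = (2*real m - 1) * exp (ln (real p) / m)"
    using p by (simp add: powr_def)
  also have "\<dots> \<le> 2 * exp 1 * ln (real p) - exp 1"
    using exp_div_le_between_floor[OF m] by (simp add: algebra_simps)
  finally have "(2*real m - 1) * real p powr (1/m) \<le> M_const p"
    by (simp add: M_const_def)
  with m(1) show ?thesis
    by (rule that)
qed

theorem lemmaB3:
  fixes M :: "'a measure" and N :: "'i set" and E :: "'i \<Rightarrow> 'i \<Rightarrow> bool"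
    and \<xi> :: "'i \<Rightarrow> 'a \<Rightarrow> real ^ 'p"
  assumes "prob_space M"
    and "finite N"
    and meas: "\<And>i. i \<in> N \<Longrightarrow> \<xi> i \<in> borel_measurable M"
    and mean0: "\<And>i k. i \<in> N \<Longrightarrow> integrable M (\<lambda>\<omega>. \<xi> i \<omega> $ k) \<and> (\<integral>\<omega>. \<xi> i \<omega> $ k \<partial>M) = 0"
    and mom2: "\<And>i. i \<in> N \<Longrightarrow> integrable M (\<lambda>\<omega>. (MAX k. \<bar>\<xi> i \<omega> $ k\<bar>)\<^sup>2)"
    and dep: "dependency_graph M N E \<xi>"
  shows "(\<integral>\<omega>. (MAX k. \<bar>\<Sum>i\<in>N. \<xi> i \<omega> $ k\<bar>)\<^sup>2 \<partial>M)
           \<le> (real (max_degree N E) + 1)\<^sup>2 * M_const CARD('p)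
              * (\<Sum>i\<in>N. \<integral>\<omega>. (MAX k. \<bar>\<xi> i \<omega> $ k\<bar>)\<^sup>2 \<partial>M)"
proof -
  interpret prob_space M by fact
  define d where "d = max_degree N E"
  define \<Sigma> where "\<Sigma> = (\<Sum>i\<in>N. \<integral>\<omega>. (MAX k. \<bar>\<xi> i \<omega> $ k\<bar>)\<^sup>2 \<partial>M)"
  obtain m where m: "m \<ge> 1" and const: "(2*real m - 1) * real CARD('p) powr (1/m) \<le> M_const CARD('p)"
    using M_const_bound[of "CARD('p)"] by auto
  have deg: "card (nbhd N E i) \<le> d" if "i \<in> N" for i
    using \<open>finite N\<close> that by (simp add: d_def max_degree_def)
  have "0 \<le> \<Sigma>" and "0 \<le> M_const CARD('p)"
    by (auto simp: \<Sigma>_def M_const_def intro!: sum_nonneg)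
  have "(\<integral>\<omega>. (MAX k. \<bar>\<Sum>i\<in>N. \<xi> i \<omega> $ k\<bar>)\<^sup>2 \<partial>M)
      \<le> (real d + 1) * ((2*real m - 1) * real CARD('p) powr (1/m)) * \<Sigma>"
    unfolding \<Sigma>_def by (rule integral_Max_abs_sum_sq_le[OF \<open>finite N\<close> m dep meas mean0 mom2 deg])
  also have "\<dots> \<le> (real d + 1) * M_const CARD('p) * \<Sigma>"
    using const \<open>0 \<le> \<Sigma>\<close> by (intro mult_right_mono mult_left_mono) auto
  also have "\<dots> \<le> (real d + 1)\<^sup>2 * M_const CARD('p) * \<Sigma>"
    using \<open>0 \<le> \<Sigma>\<close> \<open>0 \<le> M_const CARD('p)\<close>
    by (intro mult_right_mono) (simp_all add: power2_eq_square)
  finally show ?thesis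
    by (simp add: d_def \<Sigma>_def)
qed

end
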